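(* Let $M\in\mathcal{B}_{\infty}$ be such that $\mu(M)<\infty$. Then, $L^{p}(M,\mu)$ is separable for every $1\leq p <\infty$.
   Context: Let $\mathcal{B}$ be the Borel $\sigma$-algebra of $\mathbb{R}$, $\lambda$ the Lebesgue measure, and $\mathcal{B}_{\infty}$ the $\sigma$-algebra on $\mathbb{R}^{\mathbb{N}}$ generated by the cylinder sets $\prod_{i=1}^{m}C_{i}\times\prod_{i=m+1}^{\infty}\mathbb{R}$ with $C_i\in\mathcal{B}$, $m\in\mathbb{N}$. Let $\mathcal{F}(\mathcal{B},\lambda)$ be the set of finite rectangles $\prod_{i\in\mathbb{N}}C_{i}$ with $C_i\in\mathcal{B}$ and $\prod_{i}\lambda(C_i)\in[0,\infty)$, with $\mathrm{vol}(\prod_{i}C_i):=\prod_i\lambda(C_i)$. The measure $\mu$ is the restriction to $\mathcal{B}_{\infty}$ of the outer measure $\mu^{\ast}(A):=\inf\{\sum_{n}\mathrm{vol}(\mathscr{C}_{n}) : \mathscr{C}_{n}\in\mathcal{F}(\mathcal{B},\lambda),\ A\subset\bigcup_{n}\mathscr{C}_{n}\}$ ($\inf\varnothing=\infty$). *)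

theory Defs
  imports "HOL-Analysis.Analysis"
begin

definition cylinders :: "(nat \<Rightarrow> real) set set" where
  "cylinders = {{x. \<forall>i<m. x i \<in> C i} | m C. \<forall>i<m. C i \<in> sets borel}"

definition B_inf :: "(nat \<Rightarrow> real) set set" where
  "B_inf = sigma_sets UNIV cylinders"

definition rect_vol_conv :: "(nat \<Rightarrow> real set) \<Rightarrow> ennreal \<Rightarrow> bool" where
  "rect_vol_conv C v \<longleftrightarrow> (\<lambda>n. \<Prod>i<n. emeasure lborel (C i)) \<longlonglongrightarrow> v"

definition fin_rects :: "(nat \<Rightarrow> real set) set" where
  "fin_rects = {C. (\<forall>i. C i \<in> sets borel) \<and> (\<exists>v. rect_vol_conv C v \<and> v < \<infinity>)}"

definition rect :: "(nat \<Rightarrow> real set) \<Rightarrow> (nat \<Rightarrow> real) set" where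
  "rect C = {x. \<forall>i. x i \<in> C i}"

definition vol :: "(nat \<Rightarrow> real set) \<Rightarrow> ennreal" where
  "vol C = lim (\<lambda>n. \<Prod>i<n. emeasure lborel (C i))"

text \<open>Outer measure mu* (inf of the empty set is \<infinity> = top).\<close>
definition mu_outer :: "(nat \<Rightarrow> real) set \<Rightarrow> ennreal" where
  "mu_outer A = Inf {(\<Sum>n. vol (R n)) | R. (\<forall>n. R n \<in> fin_rects) \<and> A \<subseteq> (\<Union>n. rect (R n))}"

definition mu :: "(nat \<Rightarrow> real) measure" where
  "mu = measure_of UNIV cylinders mu_outer"

definition Lp_space :: "'a measure \<Rightarrow> real \<Rightarrow> ('a \<Rightarrow> real) set" where
  "Lp_space N p = {f. f \<in> borel_measurable N \<and> (\<integral>\<^sup>+ x. ennreal (\<bar>f x\<bar> powr p) \<partial>N) < \<infinity>}"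

definition Lp_dist :: "'a measure \<Rightarrow> real \<Rightarrow> ('a \<Rightarrow> real) \<Rightarrow> ('a \<Rightarrow> real) \<Rightarrow> real" where
  "Lp_dist N p f g = (enn2real (\<integral>\<^sup>+ x. ennreal (\<bar>f x - g x\<bar> powr p) \<partial>N)) powr (1 / p)"

definition Lp_separable :: "'a measure \<Rightarrow> real \<Rightarrow> bool" where
  "Lp_separable N p \<longleftrightarrow> (\<exists>D. countable D \<and> D \<subseteq> Lp_space N p \<and>
     (\<forall>f\<in>Lp_space N p. \<forall>e>0. \<exists>g\<in>D. Lp_dist N p f g < e))"

end

theory Submission
  imports Defs
begin

(* For a finite measure, every L^p function is an L^p-limit of simple functions, and these in
   turn are limits of rational combinations of indicators of sets from any family A that
   approximates each measurable set in measure of the symmetric difference; for countable A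
   these combinations form a countable dense set. If the sigma-algebra has a countable
   generator, the algebra it generates is such a family: it is countable, and the sets it
   approximates form a sigma-algebra. B_inf is generated by the countably many sets
   {x. x i \<in> U} with U from a countable basis of the reals, and restricting to M preserves
   countable generation. *)

section \<open>Approximation in L^p\<close>

abbreviation Lp_norm_powr :: "'a measure \<Rightarrow> real \<Rightarrow> ('a \<Rightarrow> real) \<Rightarrow> ennreal" where
  "Lp_norm_powr N p f \<equiv> \<integral>\<^sup>+x. ennreal (\<bar>f x\<bar> powr p) \<partial>N"

lemma abs_add_powr_le:
  fixes a b p :: real
  assumes "0 < p"
  shows "\<bar>a + b\<bar> powr p \<le> 2 powr p * (\<bar>a\<bar> powr p + \<bar>b\<bar> powr p)"
proof -
  have "\<bar>a + b\<bar> powr p \<le> (2 * max \<bar>a\<bar> \<bar>b\<bar>) powr p"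
    using assms by (intro powr_mono2) auto
  also have "\<dots> = 2 powr p * max \<bar>a\<bar> \<bar>b\<bar> powr p"
    by (simp add: powr_mult)
  also have "max \<bar>a\<bar> \<bar>b\<bar> powr p \<le> \<bar>a\<bar> powr p + \<bar>b\<bar> powr p"
    by (simp add: max_def)
  finally show ?thesis
    by simp
qed

lemma mult_less_if_less_divide_add_one:
  fixes c m e :: real
  assumes "0 \<le> c" "0 \<le> m" "m < e / (c + 1)"
  shows "c * m < e"
proof -
  have "0 < e / (c + 1)"
    using assms by linarith
  then have "0 < e"
    using \<open>0 \<le> c\<close> by (simp add: zero_less_divide_iff)
  have "c * m \<le> c * (e / (c + 1))"
    using assms by (intro mult_left_mono) auto
  also have "\<dots> < e"
    using \<open>0 < e\<close> \<open>0 \<le> c\<close> by (simp add: field_simps)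
  finally show ?thesis .
qed

lemma Lp_norm_powr_add_le:
  assumes "0 < p" and [measurable]: "u \<in> borel_measurable N" "v \<in> borel_measurable N"
  shows "Lp_norm_powr N p (\<lambda>x. u x + v x) \<le>
    ennreal (2 powr p) * (Lp_norm_powr N p u + Lp_norm_powr N p v)"
proof -
  have "Lp_norm_powr N p (\<lambda>x. u x + v x) \<le>
      (\<integral>\<^sup>+x. ennreal (2 powr p) * (ennreal (\<bar>u x\<bar> powr p) + ennreal (\<bar>v x\<bar> powr p)) \<partial>N)"
    using abs_add_powr_le[OF assms(1)]
    by (intro nn_integral_mono) (simp add: ennreal_leI flip: ennreal_plus ennreal_mult)
  also have "\<dots> = ennreal (2 powr p) * (Lp_norm_powr N p u + Lp_norm_powr N p v)"
    by (simp add: nn_integral_cmult nn_integral_add)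
  finally show ?thesis .
qed

lemma Lp_norm_powr_add_less:
  assumes "0 < p" "0 < e" "u \<in> borel_measurable N" "v \<in> borel_measurable N"
    and u: "Lp_norm_powr N p u < ennreal (e / (2 * 2 powr p))"
    and v: "Lp_norm_powr N p v < ennreal (e / (2 * 2 powr p))"
  shows "Lp_norm_powr N p (\<lambda>x. u x + v x) < ennreal e"
proof -
  have "Lp_norm_powr N p (\<lambda>x. u x + v x) \<le>
      ennreal (2 powr p) * (Lp_norm_powr N p u + Lp_norm_powr N p v)"
    using assms(1,3,4) by (rule Lp_norm_powr_add_le)
  also have "\<dots> < ennreal (2 powr p) * (ennreal (e / (2 * 2 powr p)) + ennreal (e / (2 * 2 powr p)))"
    using u v by (intro ennreal_mult_strict_left_mono add_strict_mono) auto
  also have "\<dots> = ennreal e"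
    using \<open>0 < e\<close> by (simp flip: ennreal_plus ennreal_mult add: field_simps)
  finally show ?thesis .
qed

lemma Lp_norm_powr_cmult_indicator:
  assumes "0 < p" "S \<in> sets N"
  shows "Lp_norm_powr N p (\<lambda>x. c * indicator S x) = ennreal (\<bar>c\<bar> powr p) * emeasure N S"
proof -
  have "Lp_norm_powr N p (\<lambda>x. c * indicator S x) = (\<integral>\<^sup>+x. ennreal (\<bar>c\<bar> powr p) * indicator S x \<partial>N)"
    using assms(1) by (intro nn_integral_cong) (simp add: indicator_def)
  also have "\<dots> = ennreal (\<bar>c\<bar> powr p) * emeasure N S"
    using assms(2) by (rule nn_integral_cmult_indicator)
  finally show ?thesis .
qed

lemma Lp_norm_powr_dominated_convergence:
  assumes "0 < p" "f \<in> Lp_space N p" "\<And>i. F i \<in> borel_measurable N"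
    and lim: "\<And>x. x \<in> space N \<Longrightarrow> (\<lambda>i. F i x) \<longlonglongrightarrow> f x"
    and bound: "\<And>i x. x \<in> space N \<Longrightarrow> \<bar>F i x\<bar> \<le> 2 * \<bar>f x\<bar>"
  shows "(\<lambda>i. Lp_norm_powr N p (\<lambda>x. f x - F i x)) \<longlonglongrightarrow> 0"
proof -
  have [measurable]: "f \<in> borel_measurable N" "\<And>i. F i \<in> borel_measurable N"
    and f_finite: "Lp_norm_powr N p f < \<infinity>"
    using assms(2,3) by (auto simp: Lp_space_def)
  have "(\<lambda>i. Lp_norm_powr N p (\<lambda>x. f x - F i x)) \<longlonglongrightarrow> (\<integral>\<^sup>+x. 0 \<partial>N)"
  proof (rule nn_integral_dominated_convergence[where w="\<lambda>x. ennreal (3 powr p * \<bar>f x\<bar> powr p)"])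
    show "(\<lambda>x. ennreal (\<bar>f x - F i x\<bar> powr p)) \<in> borel_measurable N" for i
      by measurable
    show "(\<lambda>x. 0) \<in> borel_measurable N"
      by simp
    show "(\<lambda>x. ennreal (3 powr p * \<bar>f x\<bar> powr p)) \<in> borel_measurable N"
      by measurable
    have "\<bar>f x - F i x\<bar> powr p \<le> (3 * \<bar>f x\<bar>) powr p" if "x \<in> space N" for i x
      using bound[OF that, of i] \<open>0 < p\<close> by (intro powr_mono2) auto
    then show "AE x in N. ennreal (\<bar>f x - F i x\<bar> powr p) \<le> ennreal (3 powr p * \<bar>f x\<bar> powr p)" for i
      by (intro AE_I2) (simp add: powr_mult ennreal_leI)
    have "(\<integral>\<^sup>+x. ennreal (3 powr p * \<bar>f x\<bar> powr p) \<partial>N) = ennreal (3 powr p) * Lp_norm_powr N p f"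
      by (simp add: nn_integral_cmult ennreal_mult)
    then show "(\<integral>\<^sup>+x. ennreal (3 powr p * \<bar>f x\<bar> powr p) \<partial>N) < \<infinity>"
      using f_finite by (simp add: ennreal_mult_less_top)
    have "(\<lambda>i. ennreal (\<bar>f x - F i x\<bar> powr p)) \<longlonglongrightarrow> 0" if "x \<in> space N" for x
    proof -
      have "(\<lambda>i. f x - F i x) \<longlonglongrightarrow> f x - f x"
        using lim[OF that] by (intro tendsto_diff tendsto_const)
      then have "(\<lambda>i. \<bar>f x - F i x\<bar>) \<longlonglongrightarrow> 0"
        by (intro tendsto_rabs_zero) simp
      then have "(\<lambda>i. \<bar>f x - F i x\<bar> powr p) \<longlonglongrightarrow> 0"
        using \<open>0 < p\<close> by (intro tendsto_zero_powrI[where b=p]) auto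
      then have "(\<lambda>i. ennreal (\<bar>f x - F i x\<bar> powr p)) \<longlonglongrightarrow> ennreal 0"
        by (rule tendsto_ennrealI)
      then show ?thesis
        by simp
    qed
    then show "AE x in N. (\<lambda>i. ennreal (\<bar>f x - F i x\<bar> powr p)) \<longlonglongrightarrow> 0"
      by (rule AE_I2)
  qed
  then show ?thesis
    by simp
qed

lemma Lp_space_simple_function_approx:
  assumes "0 < p" and f: "f \<in> Lp_space N p"
  obtains F where "\<And>i. simple_function N (F i)"
    "(\<lambda>i. Lp_norm_powr N p (\<lambda>x. f x - F i x)) \<longlonglongrightarrow> 0"
proof -
  have "f \<in> borel_measurable N"
    using f by (simp add: Lp_space_def)
  from borel_measurable_implies_sequence_metric[OF this, of 0] obtain F
    where F: "\<And>i. simple_function N (F i)"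
    and lim: "\<And>x. x \<in> space N \<Longrightarrow> (\<lambda>i. F i x) \<longlonglongrightarrow> f x"
    and bound: "\<And>i x. x \<in> space N \<Longrightarrow> dist (F i x) 0 \<le> 2 * dist (f x) 0"
    by blast
  have "\<bar>F i x\<bar> \<le> 2 * \<bar>f x\<bar>" if "x \<in> space N" for i x
    using bound[OF that] by (simp add: dist_real_def)
  with assms borel_measurable_simple_function[OF F] lim
  have "(\<lambda>i. Lp_norm_powr N p (\<lambda>x. f x - F i x)) \<longlonglongrightarrow> 0"
    by (rule Lp_norm_powr_dominated_convergence)
  with F show ?thesis
    by (rule that)
qed

definition Lp_approximable ::
  "'a measure \<Rightarrow> real \<Rightarrow> ('a \<Rightarrow> real) set \<Rightarrow> ('a \<Rightarrow> real) \<Rightarrow> bool" where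
  "Lp_approximable N p D f \<longleftrightarrow> f \<in> borel_measurable N \<and>
     (\<forall>e>0. \<exists>d\<in>D. Lp_norm_powr N p (\<lambda>x. f x - d x) < ennreal e)"

lemma Lp_approximable_measurable:
  "Lp_approximable N p D f \<Longrightarrow> f \<in> borel_measurable N"
  by (simp add: Lp_approximable_def)

lemma Lp_approximable_cong:
  assumes "Lp_approximable N p D f" "\<And>x. x \<in> space N \<Longrightarrow> f x = g x"
  shows "Lp_approximable N p D g"
proof -
  have "g \<in> borel_measurable N \<longleftrightarrow> f \<in> borel_measurable N"
    using assms(2) by (intro measurable_cong) simp
  moreover have "Lp_norm_powr N p (\<lambda>x. g x - d x) = Lp_norm_powr N p (\<lambda>x. f x - d x)" for d
    using assms(2) by (intro nn_integral_cong) simp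
  ultimately show ?thesis
    using assms(1) by (simp add: Lp_approximable_def)
qed

lemma Lp_approximable_add:
  assumes "0 < p" "D \<subseteq> borel_measurable N"
    and "\<And>d d'. d \<in> D \<Longrightarrow> d' \<in> D \<Longrightarrow> (\<lambda>x. d x + d' x) \<in> D"
    and f: "Lp_approximable N p D f" and g: "Lp_approximable N p D g"
  shows "Lp_approximable N p D (\<lambda>x. f x + g x)"
  unfolding Lp_approximable_def
proof (intro conjI allI impI)
  have [measurable]: "f \<in> borel_measurable N" "g \<in> borel_measurable N"
    using f g by (auto dest: Lp_approximable_measurable)
  then show "(\<lambda>x. f x + g x) \<in> borel_measurable N"
    by measurable
  fix e :: real
  assume "e > 0"
  then have "e / (2 * 2 powr p) > 0"
    by simp
  then obtain d d' where "d \<in> D" "d' \<in> D"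
    and fd: "Lp_norm_powr N p (\<lambda>x. f x - d x) < ennreal (e / (2 * 2 powr p))"
    and gd: "Lp_norm_powr N p (\<lambda>x. g x - d' x) < ennreal (e / (2 * 2 powr p))"
    using f g unfolding Lp_approximable_def by blast
  have [measurable]: "d \<in> borel_measurable N" "d' \<in> borel_measurable N"
    using assms(2) \<open>d \<in> D\<close> \<open>d' \<in> D\<close> by auto
  have "Lp_norm_powr N p (\<lambda>x. (f x - d x) + (g x - d' x)) < ennreal e"
    using fd gd by (intro Lp_norm_powr_add_less \<open>0 < p\<close> \<open>0 < e\<close>) auto
  then show "\<exists>d\<in>D. Lp_norm_powr N p (\<lambda>x. f x + g x - d x) < ennreal e"
    using assms(3)[OF \<open>d \<in> D\<close> \<open>d' \<in> D\<close>] by (auto simp: algebra_simps)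
qed

lemma Lp_approximable_trans:
  assumes "0 < p" "D \<subseteq> borel_measurable N" and [measurable]: "f \<in> borel_measurable N"
    and approx: "\<And>e. e > 0 \<Longrightarrow>
      \<exists>g. Lp_approximable N p D g \<and> Lp_norm_powr N p (\<lambda>x. f x - g x) < ennreal e"
  shows "Lp_approximable N p D f"
  unfolding Lp_approximable_def
proof (intro conjI allI impI)
  show "f \<in> borel_measurable N"
    by measurable
  fix e :: real
  assume "e > 0"
  then have "e / (2 * 2 powr p) > 0"
    by simp
  then obtain g where g: "Lp_approximable N p D g"
    and fg: "Lp_norm_powr N p (\<lambda>x. f x - g x) < ennreal (e / (2 * 2 powr p))"
    using approx by blast
  obtain d where "d \<in> D" and gd: "Lp_norm_powr N p (\<lambda>x. g x - d x) < ennreal (e / (2 * 2 powr p))"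
    using g \<open>e / (2 * 2 powr p) > 0\<close> by (auto simp: Lp_approximable_def)
  have [measurable]: "g \<in> borel_measurable N" "d \<in> borel_measurable N"
    using assms(2) g \<open>d \<in> D\<close> by (auto dest: Lp_approximable_measurable)
  have "Lp_norm_powr N p (\<lambda>x. (f x - g x) + (g x - d x)) < ennreal e"
    using fg gd by (intro Lp_norm_powr_add_less \<open>0 < p\<close> \<open>0 < e\<close>) auto
  then show "\<exists>d\<in>D. Lp_norm_powr N p (\<lambda>x. f x - d x) < ennreal e"
    using \<open>d \<in> D\<close> by auto
qed

locale Lp_approximation =
  fixes N :: "'a measure" and p :: real and D :: "('a \<Rightarrow> real) set"
  assumes p_pos: "0 < p"
    and D_measurable: "D \<subseteq> borel_measurable N"
    and D_zero: "(\<lambda>x. 0) \<in> D"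
    and D_add: "\<And>d d'. d \<in> D \<Longrightarrow> d' \<in> D \<Longrightarrow> (\<lambda>x. d x + d' x) \<in> D"
begin

abbreviation approximable :: "('a \<Rightarrow> real) \<Rightarrow> bool" where
  "approximable \<equiv> Lp_approximable N p D"

lemma approximable_sum:
  assumes "finite F" "\<And>i. i \<in> F \<Longrightarrow> approximable (f i)"
  shows "approximable (\<lambda>x. \<Sum>i\<in>F. f i x)"
  using assms
proof (induction F rule: finite_induct)
  case empty
  then show ?case
    using D_zero p_pos by (auto simp: Lp_approximable_def intro!: bexI[of _ "\<lambda>x. 0"])
next
  case (insert i F)
  then have "approximable (\<lambda>x. f i x + (\<Sum>i\<in>F. f i x))"
    by (intro Lp_approximable_add[OF p_pos D_measurable D_add]) auto
  with insert.hyps show ?case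
    by simp
qed

lemma approximable_simple_function:
  assumes indicator: "\<And>r S. S \<in> sets N \<Longrightarrow> approximable (\<lambda>x. r * indicator S x)"
    and s: "simple_function N s"
  shows "approximable s"
proof (rule Lp_approximable_cong)
  show "approximable (\<lambda>x. \<Sum>y\<in>s ` space N. y * indicator (s -` {y} \<inter> space N) x)"
  proof (rule approximable_sum)
    show "finite (s ` space N)"
      using s by (rule simple_functionD(1))
    show "approximable (\<lambda>x. y * indicator (s -` {y} \<inter> space N) x)" for y
      using simple_functionD(2)[OF s] by (rule indicator)
  qed
  show "(\<Sum>y\<in>s ` space N. y * indicator (s -` {y} \<inter> space N) x) = s x" if "x \<in> space N" for x
    using simple_function_indicator_representation_banach[OF s that]
    by (simp only: real_scaleR_def mult.commute)
qed

lemma approximable_Lp_space: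
  assumes simple: "\<And>s. simple_function N s \<Longrightarrow> approximable s" and f: "f \<in> Lp_space N p"
  shows "approximable f"
proof (rule Lp_approximable_trans[OF p_pos D_measurable])
  show "f \<in> borel_measurable N"
    using f by (simp add: Lp_space_def)
  obtain F where F: "\<And>i. simple_function N (F i)"
    and lim: "(\<lambda>i. Lp_norm_powr N p (\<lambda>x. f x - F i x)) \<longlonglongrightarrow> 0"
    using Lp_space_simple_function_approx[OF p_pos f] by blast
  fix e :: real
  assume "e > 0"
  then have "eventually (\<lambda>i. Lp_norm_powr N p (\<lambda>x. f x - F i x) < ennreal e) sequentially"
    using order_tendstoD(2)[OF lim] by simp
  then obtain i where "Lp_norm_powr N p (\<lambda>x. f x - F i x) < ennreal e"
    by (auto simp: eventually_sequentially)
  then show "\<exists>g. approximable g \<and> Lp_norm_powr N p (\<lambda>x. f x - g x) < ennreal e"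
    using simple[OF F] by blast
qed

lemma Lp_separableI:
  assumes "countable D" "D \<subseteq> Lp_space N p" "\<And>f. f \<in> Lp_space N p \<Longrightarrow> approximable f"
  shows "Lp_separable N p"
  unfolding Lp_separable_def
proof (intro exI[of _ D] conjI ballI allI impI assms(1,2))
  fix f and e :: real
  assume "f \<in> Lp_space N p" "e > 0"
  then have "e powr p > 0"
    by simp
  then obtain d where "d \<in> D" and fd: "Lp_norm_powr N p (\<lambda>x. f x - d x) < ennreal (e powr p)"
    using assms(3)[OF \<open>f \<in> Lp_space N p\<close>] unfolding Lp_approximable_def by blast
  moreover have "Lp_norm_powr N p (\<lambda>x. f x - d x) < top"
    using fd ennreal_less_top order.strict_trans by blast
  ultimately have "enn2real (Lp_norm_powr N p (\<lambda>x. f x - d x)) < e powr p"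
    by simp
  then have "enn2real (Lp_norm_powr N p (\<lambda>x. f x - d x)) powr (1 / p) < (e powr p) powr (1 / p)"
    using p_pos by (intro powr_less_mono2) auto
  then show "\<exists>d\<in>D. Lp_dist N p f d < e"
    using \<open>d \<in> D\<close> \<open>e > 0\<close> p_pos by (auto simp: Lp_dist_def powr_powr)
qed

end

section \<open>Rational step functions\<close>

primrec rat_step_function :: "(rat \<times> 'a set) list \<Rightarrow> 'a \<Rightarrow> real" where
  "rat_step_function [] = (\<lambda>x. 0)"
| "rat_step_function (qa # l) = (\<lambda>x. real_of_rat (fst qa) * indicator (snd qa) x + rat_step_function l x)"

definition rat_step_functions :: "'a set set \<Rightarrow> ('a \<Rightarrow> real) set" where
  "rat_step_functions A = rat_step_function ` lists (UNIV \<times> A)"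

lemma rat_step_function_append:
  "rat_step_function (l @ l') = (\<lambda>x. rat_step_function l x + rat_step_function l' x)"
  by (induction l) auto

lemma rat_step_function_bounded: "\<bar>rat_step_function l x\<bar> \<le> (\<Sum>qa\<leftarrow>l. \<bar>real_of_rat (fst qa)\<bar>)"
proof (induction l)
  case Nil
  then show ?case
    by simp
next
  case (Cons qa l)
  have "\<bar>rat_step_function (qa # l) x\<bar>
      \<le> \<bar>real_of_rat (fst qa) * indicator (snd qa) x\<bar> + \<bar>rat_step_function l x\<bar>"
    by (simp add: abs_triangle_ineq)
  moreover have "\<bar>real_of_rat (fst qa) * indicator (snd qa) x\<bar> \<le> \<bar>real_of_rat (fst qa)\<bar>"
    by (simp add: abs_mult indicator_def)
  ultimately show ?case
    using Cons.IH by simp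
qed

lemma rat_step_function_measurable:
  assumes "A \<subseteq> sets N" "l \<in> lists (UNIV \<times> A)"
  shows "rat_step_function l \<in> borel_measurable N"
  using assms(2) by (induction l) (use assms(1) in \<open>auto intro!: borel_measurable_add borel_measurable_times\<close>)

lemma countable_rat_step_functions: "countable A \<Longrightarrow> countable (rat_step_functions A)"
  unfolding rat_step_functions_def by auto

lemma rat_step_functions_indicator:
  "a \<in> A \<Longrightarrow> (\<lambda>x. real_of_rat q * indicator a x) \<in> rat_step_functions A"
  unfolding rat_step_functions_def by (intro image_eqI[of _ _ "[(q, a)]"]) auto

lemma Lp_approximation_rat_step_functions:
  assumes "0 < p" "A \<subseteq> sets N"
  shows "Lp_approximation N p (rat_step_functions A)"
proof
  show "rat_step_functions A \<subseteq> borel_measurable N"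
    unfolding rat_step_functions_def using rat_step_function_measurable[OF assms(2)] by blast
  show "(\<lambda>x. 0) \<in> rat_step_functions A"
    unfolding rat_step_functions_def by (intro image_eqI[of _ _ "[]"]) auto
  show "(\<lambda>x. d x + d' x) \<in> rat_step_functions A"
    if d: "d \<in> rat_step_functions A" and d': "d' \<in> rat_step_functions A" for d d'
  proof -
    obtain l l' where "l \<in> lists (UNIV \<times> A)" "l' \<in> lists (UNIV \<times> A)"
      and "d = rat_step_function l" "d' = rat_step_function l'"
      using d d' unfolding rat_step_functions_def by blast
    then show ?thesis
      unfolding rat_step_functions_def by (intro image_eqI[of _ _ "l @ l'"]) (auto simp: rat_step_function_append)
  qed
qed (fact assms(1))

lemma (in finite_measure) rat_step_functions_subset_Lp_space:
  assumes "0 < p" "A \<subseteq> sets M"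
  shows "rat_step_functions A \<subseteq> Lp_space M p"
proof
  fix d
  assume "d \<in> rat_step_functions A"
  then obtain l where l: "l \<in> lists (UNIV \<times> A)" and d: "d = rat_step_function l"
    unfolding rat_step_functions_def by blast
  define K where "K = (\<Sum>qa\<leftarrow>l. \<bar>real_of_rat (fst qa)\<bar>)"
  have "Lp_norm_powr M p d \<le> (\<integral>\<^sup>+x. ennreal (K powr p) \<partial>M)"
    unfolding d K_def using assms(1) rat_step_function_bounded
    by (intro nn_integral_mono ennreal_leI powr_mono2) auto
  also have "\<dots> < \<infinity>"
    using emeasure_finite[of "space M"] by (simp add: ennreal_mult_eq_top_iff less_top[symmetric])
  moreover have "d \<in> borel_measurable M"
    unfolding d using assms(2) l by (rule rat_step_function_measurable)
  ultimately show "d \<in> Lp_space M p"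
    by (simp add: Lp_space_def)
qed

lemma (in finite_measure) rat_step_functions_approximate_rat_indicator:
  assumes "0 < p" "A \<subseteq> sets M"
    and approx: "\<And>S e. S \<in> sets M \<Longrightarrow> 0 < e \<Longrightarrow> \<exists>a\<in>A. measure M (sym_diff S a) < e"
    and S: "S \<in> sets M"
  shows "Lp_approximable M p (rat_step_functions A) (\<lambda>x. real_of_rat q * indicator S x)"
  unfolding Lp_approximable_def
proof (intro conjI allI impI)
  show "(\<lambda>x. real_of_rat q * indicator S x) \<in> borel_measurable M"
    using S by measurable
  fix e :: real
  assume "e > 0"
  define c where "c = \<bar>real_of_rat q\<bar> powr p"
  have "c \<ge> 0"
    by (simp add: c_def)
  then have "e / (c + 1) > 0"
    using \<open>e > 0\<close> by simp
  then obtain a where "a \<in> A" and a: "measure M (sym_diff S a) < e / (c + 1)"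
    using approx[OF S] by blast
  have "Lp_norm_powr M p (\<lambda>x. real_of_rat q * indicator S x - real_of_rat q * indicator a x)
      = Lp_norm_powr M p (\<lambda>x. real_of_rat q * indicator (sym_diff S a) x)"
    by (intro nn_integral_cong) (auto simp: indicator_def)
  also have "\<dots> = ennreal (c * measure M (sym_diff S a))"
    using S \<open>a \<in> A\<close> assms(1,2) \<open>c \<ge> 0\<close>
    by (auto simp: Lp_norm_powr_cmult_indicator c_def emeasure_eq_measure ennreal_mult)
  also have "\<dots> < ennreal e"
    using \<open>e > 0\<close> \<open>c \<ge> 0\<close> a by (intro ennreal_lessI mult_less_if_less_divide_add_one) auto
  finally show "\<exists>d\<in>rat_step_functions A.
      Lp_norm_powr M p (\<lambda>x. real_of_rat q * indicator S x - d x) < ennreal e"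
    by (intro bexI[OF _ rat_step_functions_indicator[OF \<open>a \<in> A\<close>]])
qed

lemma (in finite_measure) rat_step_functions_approximate_indicator:
  assumes "0 < p" "A \<subseteq> sets M"
    and approx: "\<And>S e. S \<in> sets M \<Longrightarrow> 0 < e \<Longrightarrow> \<exists>a\<in>A. measure M (sym_diff S a) < e"
    and S: "S \<in> sets M"
  shows "Lp_approximable M p (rat_step_functions A) (\<lambda>x. r * indicator S x)"
proof -
  interpret Lp_approximation M p "rat_step_functions A"
    using assms(1,2) by (rule Lp_approximation_rat_step_functions)
  show ?thesis
  proof (rule Lp_approximable_trans[OF p_pos D_measurable])
    show "(\<lambda>x. r * indicator S x) \<in> borel_measurable M"
      using S by measurable
    fix e :: real
    assume "e > 0"
    define m where "m = measure M S"
    have "m \<ge> 0"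
      by (simp add: m_def)
    define \<eta> where "\<eta> = (e / (m + 1)) powr (1 / p)"
    have "\<eta> > 0"
      using \<open>e > 0\<close> \<open>m \<ge> 0\<close> by (simp add: \<eta>_def)
    then obtain q where q: "r < real_of_rat q" "real_of_rat q < r + \<eta>"
      using of_rat_dense[of r "r + \<eta>"] by auto
    have "\<bar>r - real_of_rat q\<bar> powr p < \<eta> powr p"
      using q p_pos by (intro powr_less_mono2) auto
    also have "\<eta> powr p = e / (m + 1)"
      using \<open>e > 0\<close> \<open>m \<ge> 0\<close> p_pos by (simp add: \<eta>_def powr_powr)
    finally have rq: "\<bar>r - real_of_rat q\<bar> powr p < e / (m + 1)" .
    have "Lp_norm_powr M p (\<lambda>x. r * indicator S x - real_of_rat q * indicator S x)
        = Lp_norm_powr M p (\<lambda>x. (r - real_of_rat q) * indicator S x)"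
      by (simp add: left_diff_distrib)
    also have "\<dots> = ennreal (\<bar>r - real_of_rat q\<bar> powr p * m)"
      using S p_pos \<open>m \<ge> 0\<close>
      by (simp add: Lp_norm_powr_cmult_indicator m_def emeasure_eq_measure ennreal_mult)
    also have "\<dots> < ennreal e"
    proof (rule ennreal_lessI[OF \<open>e > 0\<close>])
      show "\<bar>r - real_of_rat q\<bar> powr p * m < e"
        using mult_less_if_less_divide_add_one[OF \<open>m \<ge> 0\<close> powr_ge_zero rq] by (simp add: mult.commute)
    qed
    finally show "\<exists>g. approximable g \<and> Lp_norm_powr M p (\<lambda>x. r * indicator S x - g x) < ennreal e"
      using rat_step_functions_approximate_rat_indicator[OF assms] by blast
  qed
qed

theorem (in finite_measure) Lp_separable_if_sets_approximable:
  assumes "0 < p" "countable A" "A \<subseteq> sets M"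
    and approx: "\<And>S e. S \<in> sets M \<Longrightarrow> 0 < e \<Longrightarrow> \<exists>a\<in>A. measure M (sym_diff S a) < e"
  shows "Lp_separable M p"
proof -
  interpret Lp_approximation M p "rat_step_functions A"
    using assms(1,3) by (rule Lp_approximation_rat_step_functions)
  show ?thesis
  proof (rule Lp_separableI)
    show "countable (rat_step_functions A)"
      using assms(2) by (rule countable_rat_step_functions)
    show "rat_step_functions A \<subseteq> Lp_space M p"
      using assms(1,3) by (rule rat_step_functions_subset_Lp_space)
    show "approximable f" if "f \<in> Lp_space M p" for f
    proof (rule approximable_Lp_space[OF _ that])
      show "approximable s" if "simple_function M s" for s
        using rat_step_functions_approximate_indicator[OF assms(1,3) approx] that
        by (rule approximable_simple_function)
    qed
  qed
qed

section \<open>Countably generated sigma-algebras\<close>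

(* Formal Boolean combinations of the generators g n: their values form a countable algebra. *)
datatype set_term = Generator nat | Compl_term set_term | Union_term set_term set_term | Empty_term

instance set_term :: countable
  by countable_datatype

primrec eval_set_term :: "'a set \<Rightarrow> (nat \<Rightarrow> 'a set) \<Rightarrow> set_term \<Rightarrow> 'a set" where
  "eval_set_term \<Omega> g (Generator n) = g n"
| "eval_set_term \<Omega> g (Compl_term t) = \<Omega> - eval_set_term \<Omega> g t"
| "eval_set_term \<Omega> g (Union_term t u) = eval_set_term \<Omega> g t \<union> eval_set_term \<Omega> g u"
| "eval_set_term \<Omega> g Empty_term = {}"

lemma eval_set_term_subset: "(\<And>n. g n \<subseteq> \<Omega>) \<Longrightarrow> eval_set_term \<Omega> g t \<subseteq> \<Omega>"
  by (induction t) auto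

lemma eval_set_term_in_sigma_sets:
  "(\<And>n. g n \<in> sigma_sets \<Omega> G) \<Longrightarrow> eval_set_term \<Omega> g t \<in> sigma_sets \<Omega> G"
  by (induction t) (simp_all add: sigma_sets.Compl sigma_sets_Un sigma_sets.Empty)

lemma algebra_range_eval_set_term:
  assumes "\<And>n. g n \<subseteq> \<Omega>"
  shows "algebra \<Omega> (range (eval_set_term \<Omega> g))"
  unfolding algebra_iff_Un
proof (intro conjI ballI)
  show "range (eval_set_term \<Omega> g) \<subseteq> Pow \<Omega>"
    using eval_set_term_subset[of g \<Omega>, OF assms] by blast
  show "{} \<in> range (eval_set_term \<Omega> g)"
    by (rule range_eqI[of _ _ Empty_term]) simp
  show "\<Omega> - a \<in> range (eval_set_term \<Omega> g)" if "a \<in> range (eval_set_term \<Omega> g)" for a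
  proof -
    from that obtain t where "a = eval_set_term \<Omega> g t"
      by blast
    then show ?thesis
      by (intro range_eqI[of _ _ "Compl_term t"]) simp
  qed
  show "a \<union> b \<in> range (eval_set_term \<Omega> g)"
    if a: "a \<in> range (eval_set_term \<Omega> g)" and b: "b \<in> range (eval_set_term \<Omega> g)" for a b
  proof -
    from a b obtain t u where "a = eval_set_term \<Omega> g t" "b = eval_set_term \<Omega> g u"
      by blast
    then show ?thesis
      by (intro range_eqI[of _ _ "Union_term t u"]) simp
  qed
qed

lemma ex_countable_algebra_generating:
  assumes "countable G" "G \<subseteq> Pow \<Omega>"
  obtains A where "countable A" "algebra \<Omega> A" "sigma_sets \<Omega> A = sigma_sets \<Omega> G"
proof -
  (* Inserting {} keeps the enumerated set nonempty, as from_nat_into requires. *)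
  define g where "g = from_nat_into (insert {} G)"
  have range_g: "range g = insert {} G"
    using assms(1) by (simp add: g_def)
  have g_sub: "g n \<subseteq> \<Omega>" and g_sigma: "g n \<in> sigma_sets \<Omega> G" for n
    using rangeI[of g n] assms(2) unfolding range_g by (auto intro: sigma_sets.Basic sigma_sets.Empty)
  have "G \<subseteq> range (eval_set_term \<Omega> g)"
  proof
    fix a
    assume "a \<in> G"
    then have "a \<in> range g"
      using range_g by blast
    then obtain n where "a = g n"
      by blast
    then show "a \<in> range (eval_set_term \<Omega> g)"
      by (intro range_eqI[of _ _ "Generator n"]) simp
  qed
  then have "sigma_sets \<Omega> G \<subseteq> sigma_sets \<Omega> (range (eval_set_term \<Omega> g))"
    by (rule sigma_sets_mono')
  moreover have "sigma_sets \<Omega> (range (eval_set_term \<Omega> g)) \<subseteq> sigma_sets \<Omega> G"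
    using eval_set_term_in_sigma_sets[of g, OF g_sigma] by (intro sigma_sets_mono) blast
  ultimately have "sigma_sets \<Omega> (range (eval_set_term \<Omega> g)) = sigma_sets \<Omega> G"
    by blast
  moreover have "countable (range (eval_set_term \<Omega> g))"
    by simp
  ultimately show ?thesis
    using that algebra_range_eval_set_term[of g, OF g_sub] by blast
qed

lemma (in finite_measure) ex_measure_diff_finite_UN_less:
  fixes A :: "nat \<Rightarrow> 'a set"
  assumes "range A \<subseteq> sets M" "0 < e"
  obtains k where "measure M ((\<Union>i. A i) - (\<Union>i<k. A i)) < e"
proof -
  have "(\<lambda>k. measure M (\<Union>i<k. A i)) \<longlonglongrightarrow> measure M (\<Union>k. \<Union>i<k. A i)"
    using assms(1) by (intro finite_Lim_measure_incseq incseq_SucI) (auto simp: lessThan_Suc)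
  moreover have "(\<Union>k. \<Union>i<k. A i) = (\<Union>i. A i)"
    by blast
  ultimately obtain k where "\<bar>measure M (\<Union>i<k. A i) - measure M (\<Union>i. A i)\<bar> < e"
    using LIMSEQ_D[of _ "measure M (\<Union>i. A i)" e] \<open>0 < e\<close> by fastforce
  moreover have "measure M ((\<Union>i. A i) - (\<Union>i<k. A i)) = measure M (\<Union>i. A i) - measure M (\<Union>i<k. A i)"
    using assms(1) by (intro finite_measure_Diff) auto
  ultimately have "measure M ((\<Union>i. A i) - (\<Union>i<k. A i)) < e"
    by linarith
  then show ?thesis
    by (rule that)
qed

lemma (in finite_measure) ring_of_sets_approximates_UN:
  fixes F :: "nat \<Rightarrow> 'a set"
  assumes "ring_of_sets (space M) A" "A \<subseteq> sets M" "range F \<subseteq> sets M" "0 < e"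
    and approx: "\<And>i \<delta>. 0 < \<delta> \<Longrightarrow> \<exists>a\<in>A. measure M (sym_diff (F i) a) < \<delta>"
  shows "\<exists>a\<in>A. measure M (sym_diff (\<Union>i. F i) a) < e"
proof -
  interpret A: ring_of_sets "space M" A
    by fact
  have "0 < e / 2"
    using \<open>0 < e\<close> by simp
  with assms(3) obtain k where k: "measure M ((\<Union>i. F i) - (\<Union>i<k. F i)) < e / 2"
    by (rule ex_measure_diff_finite_UN_less)
  define \<delta> where "\<delta> = e / (2 * (real k + 1))"
  have "\<delta> > 0"
    using \<open>0 < e\<close> by (simp add: \<delta>_def)
  then have "\<forall>i. \<exists>b. b \<in> A \<and> measure M (sym_diff (F i) b) < \<delta>"
    using approx by blast
  then obtain a where a_A: "\<And>i. a i \<in> A" and a: "\<And>i. measure M (sym_diff (F i) (a i)) < \<delta>"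
    by metis
  have a_sets: "a i \<in> sets M" for i
    using a_A assms(2) by blast
  have "measure M (sym_diff (\<Union>i. F i) (\<Union>i<k. a i))
      \<le> measure M (((\<Union>i. F i) - (\<Union>i<k. F i)) \<union> (\<Union>i<k. sym_diff (F i) (a i)))"
    using assms(3) a_sets by (intro finite_measure_mono) auto
  also have "\<dots> \<le> measure M ((\<Union>i. F i) - (\<Union>i<k. F i)) + measure M (\<Union>i<k. sym_diff (F i) (a i))"
    using assms(3) a_sets by (intro measure_Un_le) auto
  also have "measure M (\<Union>i<k. sym_diff (F i) (a i)) \<le> (\<Sum>i<k. measure M (sym_diff (F i) (a i)))"
    using assms(3) a_sets by (intro measure_subadditive_finite) auto
  also have "\<dots> \<le> real k * \<delta>"
    using sum_mono[of "{..<k}" "\<lambda>i. measure M (sym_diff (F i) (a i))" "\<lambda>_. \<delta>"] a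
    by (simp add: less_imp_le)
  also have "real k * \<delta> \<le> e / 2"
    using \<open>0 < e\<close> by (simp add: \<delta>_def field_simps)
  finally have "measure M (sym_diff (\<Union>i. F i) (\<Union>i<k. a i)) < e"
    using k by linarith
  moreover have "(\<Union>i<k. a i) \<in> A"
    using a_A by auto
  ultimately show ?thesis
    by blast
qed

lemma (in finite_measure) generating_algebra_approximates_sets:
  assumes "algebra (space M) A" "sets M = sigma_sets (space M) A" "S \<in> sets M" "0 < e"
  shows "\<exists>a\<in>A. measure M (sym_diff S a) < e"
proof -
  interpret A: algebra "space M" A
    by fact
  have A_sets: "A \<subseteq> sets M"
    using assms(2) by (auto intro: sigma_sets.Basic)
  from assms(3,4) show ?thesis
    unfolding assms(2)
  proof (induction arbitrary: e)
    case (Basic S)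
    then show ?case
      by (intro bexI[of _ S]) auto
  next
    case Empty
    then show ?case
      by (intro bexI[of _ "{}"]) auto
  next
    case (Compl S)
    then obtain a where "a \<in> A" and a: "measure M (sym_diff S a) < e"
      by blast
    have "S \<subseteq> space M"
      using A.space_closed Compl.hyps by (rule sigma_sets_into_sp)
    then have "sym_diff (space M - S) (space M - a) = sym_diff S a"
      using A.sets_into_space \<open>a \<in> A\<close> by blast
    then show ?case
      using a \<open>a \<in> A\<close> by (intro bexI[of _ "space M - a"]) auto
  next
    case (Union F)
    have "range F \<subseteq> sets M"
      using Union.hyps by (auto simp: assms(2))
    with A.ring_of_sets_axioms A_sets show ?case
      using \<open>0 < e\<close> Union.IH by (rule ring_of_sets_approximates_UN)
  qed
qed

theorem (in finite_measure) Lp_separable_if_countably_generated: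
  assumes "0 < p" "countable G" "sets M = sigma_sets (space M) G"
  shows "Lp_separable M p"
proof -
  have "G \<subseteq> Pow (space M)"
    using assms(3) sets.sets_into_space by (auto intro: sigma_sets.Basic)
  then obtain A where "countable A" "algebra (space M) A"
    and "sigma_sets (space M) A = sigma_sets (space M) G"
    by (rule ex_countable_algebra_generating[OF assms(2)])
  then have A_generates: "sets M = sigma_sets (space M) A"
    using assms(3) by simp
  show ?thesis
  proof (rule Lp_separable_if_sets_approximable[OF assms(1) \<open>countable A\<close>])
    show "A \<subseteq> sets M"
      using A_generates by (auto intro: sigma_sets.Basic)
    show "\<exists>a\<in>A. measure M (sym_diff S a) < e" if "S \<in> sets M" "0 < e" for S e
      using \<open>algebra (space M) A\<close> A_generates that by (rule generating_algebra_approximates_sets)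
  qed
qed

section \<open>The sigma-algebra B_inf\<close>

definition coordinate_sets :: "real set set \<Rightarrow> (nat \<Rightarrow> real) set set" where
  "coordinate_sets B = (\<lambda>(i, U). {x. x i \<in> U}) ` (UNIV \<times> B)"

lemma sigma_sets_coordinate_sets_subset_B_inf:
  assumes "B \<subseteq> sets borel"
  shows "sigma_sets UNIV (coordinate_sets B) \<subseteq> B_inf"
  unfolding B_inf_def
proof (rule sigma_sets_mono', rule subsetI)
  fix X
  assume "X \<in> coordinate_sets B"
  then obtain i U where "U \<in> B" and X: "X = {x. x i \<in> U}"
    unfolding coordinate_sets_def by auto
  have "X = {x. \<forall>j<Suc i. x j \<in> (if j = i then U else UNIV)}"
    unfolding X by (auto simp: less_Suc_eq)
  then show "X \<in> cylinders"
    using assms \<open>U \<in> B\<close> unfolding cylinders_def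
    by (intro CollectI exI[of _ "Suc i"] exI[of _ "\<lambda>j. if j = i then U else UNIV"]) auto
qed

lemma B_inf_subset_sigma_sets_coordinate_sets:
  assumes B: "sets borel = sigma_sets UNIV B"
  shows "B_inf \<subseteq> sigma_sets UNIV (coordinate_sets B)"
  unfolding B_inf_def
proof (rule sigma_sets_mono, rule subsetI)
  let ?M = "sigma UNIV (coordinate_sets B)"
  have sets_M: "sets ?M = sigma_sets UNIV (coordinate_sets B)"
    by (rule sets_measure_of) simp
  have coordinate: "(\<lambda>x. x i) \<in> ?M \<rightarrow>\<^sub>M borel" for i
  proof (rule measurable_sigma_sets[OF B])
    show "(\<lambda>x. x i) -` U \<inter> space ?M \<in> sets ?M" if "U \<in> B" for U
      using that unfolding sets_M coordinate_sets_def by (auto intro!: sigma_sets.Basic)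
  qed auto
  fix X
  assume "X \<in> cylinders"
  then obtain m C where X: "X = {x. \<forall>i<m. x i \<in> C i}" and C: "\<forall>i<m. C i \<in> sets borel"
    unfolding cylinders_def by blast
  have "{x \<in> space ?M. \<forall>i\<in>{..<m}. x i \<in> C i} \<in> sets ?M"
  proof (rule sets.sets_Collect_finite_All)
    show "{x \<in> space ?M. x i \<in> C i} \<in> sets ?M" if "i \<in> {..<m}" for i
      using measurable_sets[OF coordinate, of "C i" i] C that by (simp add: vimage_def Int_def conj_commute)
  qed simp
  moreover have "X = {x \<in> space ?M. \<forall>i\<in>{..<m}. x i \<in> C i}"
    unfolding X by (auto simp: space_measure_of_conv)
  ultimately show "X \<in> sigma_sets UNIV (coordinate_sets B)"
    using sets_M by simp
qed

lemma B_inf_countably_generated: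
  obtains G where "countable G" "B_inf = sigma_sets UNIV G"
proof -
  obtain B :: "real set set" where "countable B" and B: "topological_basis B"
    using ex_countable_basis by blast
  then have "sets borel = sigma_sets UNIV B"
    by (simp add: borel_eq_countable_basis sets_measure_of)
  moreover have "B \<subseteq> sets borel"
    using topological_basis_open[OF B] by auto
  ultimately have "B_inf = sigma_sets UNIV (coordinate_sets B)"
    by (intro antisym[OF B_inf_subset_sigma_sets_coordinate_sets sigma_sets_coordinate_sets_subset_B_inf])
  moreover have "countable (coordinate_sets B)"
    unfolding coordinate_sets_def using \<open>countable B\<close> by auto
  ultimately show ?thesis
    using that by blast
qed

lemma sets_mu: "sets mu = B_inf"
  unfolding mu_def B_inf_def by (rule sets_measure_of) auto

lemma space_mu: "space mu = UNIV"
  unfolding mu_def by (simp add: space_measure_of_conv)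

theorem lemma2p3:
  fixes M :: "(nat \<Rightarrow> real) set" and p :: real
  assumes "M \<in> B_inf" and "emeasure mu M < \<infinity>" and "1 \<le> p"
  shows "Lp_separable (restrict_space mu M) p"
proof -
  obtain G where "countable G" and B_inf_G: "B_inf = sigma_sets UNIV G"
    by (rule B_inf_countably_generated)
  have "M \<in> sets mu"
    using assms(1) by (simp add: sets_mu)
  then interpret finite_measure "restrict_space mu M"
    using assms(2) by (intro finite_measureI) (simp add: emeasure_restrict_space space_mu)
  have "sets (restrict_space mu M) = (\<inter>) M ` sigma_sets UNIV G"
    by (simp add: sets_restrict_space sets_mu B_inf_G)
  also have "\<dots> = sigma_sets M ((\<inter>) M ` G)"
    using assms(1) B_inf_G by (intro sigma_sets_Int) auto
  finally have "sets (restrict_space mu M) = sigma_sets (space (restrict_space mu M)) ((\<inter>) M ` G)"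
    using \<open>M \<in> sets mu\<close> by simp
  then show ?thesis
    using assms(3) \<open>countable G\<close> by (intro Lp_separable_if_countably_generated) auto
qed

end
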